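(* Let $G$ be a transient vertex-transitive graph of degree $d$. Then the Gaussian free field on $G$ is (in law) a linear factor of i.i.d. process.
   Context: With $A$ the adjacency operator and $\delta_o$ the indicator of the root $o$, the Gaussian free field is the $\mathrm{Aut}(G)$-invariant, jointly Gaussian, mean-zero process $(X_v)$ with $\mathrm{cov}(X_o,X_v)=\big(\sum_{k\ge0}(A/d)^k\delta_o\big)(v)$ (the Green function, finite by transience). Linear factor of i.i.d.: with $(Z_u)$ i.i.d. standard normal, $X_v=\sum_u\beta(u)Z_{\Phi(u)}$ for some $\beta\in\ell^2(G)$ invariant under automorphisms fixing $o$, where $\Phi\in\mathrm{Aut}(G)$ with $\Phi(o)=v$. *)

theory Defs
  imports "HOL-Probability.Probability"
begin

definition d_regular_graph :: "('v \<Rightarrow> 'v \<Rightarrow> bool) \<Rightarrow> nat \<Rightarrow> bool" where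
  "d_regular_graph E d \<longleftrightarrow> (\<forall>x y. E x y \<longleftrightarrow> E y x) \<and> (\<forall>x. \<not> E x x)
     \<and> (\<forall>x. finite {y. E x y} \<and> card {y. E x y} = d)"

definition connected_graph :: "('v \<Rightarrow> 'v \<Rightarrow> bool) \<Rightarrow> bool" where
  "connected_graph E \<longleftrightarrow> (\<forall>x y. E\<^sup>*\<^sup>* x y)"

definition graph_aut :: "('v \<Rightarrow> 'v \<Rightarrow> bool) \<Rightarrow> ('v \<Rightarrow> 'v) \<Rightarrow> bool" where
  "graph_aut E \<phi> \<longleftrightarrow> bij \<phi> \<and> (\<forall>x y. E x y \<longleftrightarrow> E (\<phi> x) (\<phi> y))"

definition vertex_transitive :: "('v \<Rightarrow> 'v \<Rightarrow> bool) \<Rightarrow> bool" where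
  "vertex_transitive E \<longleftrightarrow> (\<forall>x y. \<exists>\<phi>. graph_aut E \<phi> \<and> \<phi> x = y)"

text \<open>walk_prob E d k u v = ((A/d)^k delta_u)(v), where (A f)(v) = sum of f over neighbours of v.\<close>

fun walk_prob :: "('v \<Rightarrow> 'v \<Rightarrow> bool) \<Rightarrow> nat \<Rightarrow> nat \<Rightarrow> 'v \<Rightarrow> 'v \<Rightarrow> real" where
  "walk_prob E d 0 u v = (if u = v then 1 else 0)"
| "walk_prob E d (Suc k) u v = (\<Sum>w\<in>{w. E v w}. walk_prob E d k u w) / real d"

definition green :: "('v \<Rightarrow> 'v \<Rightarrow> bool) \<Rightarrow> nat \<Rightarrow> 'v \<Rightarrow> 'v \<Rightarrow> real" where
  "green E d u v = (\<Sum>k. walk_prob E d k u v)"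

text \<open>Transience: the expected number of returns of simple random walk is finite.\<close>

definition transient :: "('v \<Rightarrow> 'v \<Rightarrow> bool) \<Rightarrow> nat \<Rightarrow> bool" where
  "transient E d \<longleftrightarrow> (\<forall>x. summable (\<lambda>k. walk_prob E d k x x))"

definition centered_normal :: "real \<Rightarrow> real measure" where
  "centered_normal s = (if s = 0 then return borel 0 else density lborel (normal_density 0 (sqrt s)))"

text \<open>X (on probability space M) is, in law, the Gaussian free field: a jointly Gaussian,
  mean-zero process with covariance cov(X_u, X_v) = green u v (determined by
  cov(X_o,X_v) and Aut(G)-invariance). Joint Gaussianity with this mean/covariance is
  expressed by: every finite linear combination is centered normal with the corresponding variance.\<close>

definition is_GFF :: "('v \<Rightarrow> 'v \<Rightarrow> bool) \<Rightarrow> nat \<Rightarrow> 'w measure \<Rightarrow> ('v \<Rightarrow> 'w \<Rightarrow> real) \<Rightarrow> bool" where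
  "is_GFF E d M X \<longleftrightarrow> (\<forall>v. X v \<in> borel_measurable M) \<and>
     (\<forall>F (a :: 'v \<Rightarrow> real). finite F \<longrightarrow>
        distr M borel (\<lambda>\<omega>. \<Sum>v\<in>F. a v * X v \<omega>)
          = centered_normal (\<Sum>u\<in>F. \<Sum>v\<in>F. a u * a v * green E d u v))"

definition iid_std_normal :: "'w measure \<Rightarrow> ('v \<Rightarrow> 'w \<Rightarrow> real) \<Rightarrow> bool" where
  "iid_std_normal M Z \<longleftrightarrow> prob_space M \<and> prob_space.indep_vars M (\<lambda>_. borel) Z UNIV
     \<and> (\<forall>u. distributed M lborel (Z u) std_normal_density)"

text \<open>Y = sum_u c u * Z u as an L^2(M)-convergent series (limit along the net of finite sets).\<close>

definition L2_series :: "'w measure \<Rightarrow> ('v \<Rightarrow> real) \<Rightarrow> ('v \<Rightarrow> 'w \<Rightarrow> real) \<Rightarrow> ('w \<Rightarrow> real) \<Rightarrow> bool" where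
  "L2_series M c Z Y \<longleftrightarrow> Y \<in> borel_measurable M \<and>
     (\<forall>\<epsilon>>0. \<exists>F0. finite F0 \<and> (\<forall>F. finite F \<and> F0 \<subseteq> F \<longrightarrow>
        (\<integral>\<^sup>+ \<omega>. ennreal ((Y \<omega> - (\<Sum>u\<in>F. c u * Z u \<omega>))\<^sup>2) \<partial>M) < ennreal \<epsilon>))"

end

theory Submission
  imports Defs
begin

text \<open>Let \<open>P = A/d\<close> and let \<open>c k\<close> be the Taylor coefficients of \<open>(1 - x) powr (-1/2)\<close>, so that
  \<open>(\<Sum>i\<le>k. c i * c (k - i)) = 1\<close>. The kernel \<open>\<beta> u w = (\<Sum>k. c k * P\<^sup>k u w)\<close> of \<open>(I - P) powr (-1/2)\<close>
  then satisfies \<open>(\<Sum>w. \<beta> u w * \<beta> v w) = (\<Sum>k. P\<^sup>k u v) = g u v\<close> by Tonelli, symmetry of \<open>P\<close> and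
  Chapman--Kolmogorov, and transience makes all these sums finite. So \<open>\<beta> o\<close> is square summable,
  invariant under the stabiliser of \<open>o\<close>, and \<open>\<beta> o (\<Phi>\<^sup>-\<^sup>1 w) = \<beta> v w\<close> when \<open>\<Phi> o = v\<close>. As the \<open>Z u\<close> are
  orthonormal in \<open>L\<^sup>2\<close>, the series \<open>X v = (\<Sum>u. \<beta> o u * Z (\<Phi> u))\<close> converge, and a finite combination
  \<open>\<Sum>v. a v * X v\<close> is the \<open>L\<^sup>2\<close>-limit of finite Gaussian sums whose variances tend to
  \<open>\<Sum>u v. a u * a v * g u v\<close>; characteristic functions then identify its law.\<close>

section \<open>Simple random walk\<close>

lemma walk_prob_nonneg: "0 \<le> walk_prob E d k u v"
  by (induction k arbitrary: v) (auto intro!: sum_nonneg divide_nonneg_nonneg)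

lemma walk_prob_chapman_kolmogorov:
  assumes "d_regular_graph E d"
  shows "(\<integral>\<^sup>+w. ennreal (walk_prob E d i u w * walk_prob E d j w v) \<partial>count_space UNIV)
         = ennreal (walk_prob E d (i + j) u v)"
proof (induction j arbitrary: v)
  case 0
  have "(\<integral>\<^sup>+w. ennreal (walk_prob E d i u w * walk_prob E d 0 w v) \<partial>count_space UNIV)
     = (\<Sum>w\<in>{v}. ennreal (walk_prob E d i u w * walk_prob E d 0 w v))"
    by (rule nn_integral_count_space') auto
  then show ?case by simp
next
  case (Suc j)
  let ?p = "walk_prob E d"
  have "ennreal (?p i u w * ?p (Suc j) w v)
        = ennreal (1 / real d) * (\<Sum>x\<in>{x. E v x}. ennreal (?p i u w * ?p j w x))" for w
    by (simp add: sum_distrib_left sum_divide_distrib ennreal_mult[symmetric] sum_ennreal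
        walk_prob_nonneg sum_nonneg)
  then have "(\<integral>\<^sup>+w. ennreal (?p i u w * ?p (Suc j) w v) \<partial>count_space UNIV)
      = ennreal (1 / real d) * (\<Sum>x\<in>{x. E v x}. \<integral>\<^sup>+w. ennreal (?p i u w * ?p j w x) \<partial>count_space UNIV)"
    by (simp add: nn_integral_cmult nn_integral_sum)
  also have "\<dots> = ennreal (1 / real d) * (\<Sum>x\<in>{x. E v x}. ennreal (?p (i + j) u x))"
    by (simp only: Suc)
  also have "\<dots> = ennreal (1 / real d * (\<Sum>x\<in>{x. E v x}. ?p (i + j) u x))"
    by (simp add: ennreal_mult[symmetric] sum_ennreal walk_prob_nonneg sum_nonneg)
  finally show ?case by simp
qed

lemma walk_prob_one:
  assumes "d_regular_graph E d"
  shows "walk_prob E d 1 u v = (if E v u then 1 / real d else 0)"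
proof -
  have "finite {w. E v w}" using assms unfolding d_regular_graph_def by blast
  then show ?thesis by (simp add: sum.delta)
qed

lemma walk_prob_sym:
  assumes "d_regular_graph E d"
  shows "walk_prob E d k u v = walk_prob E d k v u"
proof (induction k arbitrary: u v)
  case 0 then show ?case by simp
next
  case (Suc k)
  have one_sym: "walk_prob E d 1 w v = walk_prob E d 1 v w" for w
    using assms unfolding walk_prob_one[OF assms] d_regular_graph_def by auto
  have "ennreal (walk_prob E d (k + 1) u v)
      = (\<integral>\<^sup>+w. ennreal (walk_prob E d 1 v w * walk_prob E d k w u) \<partial>count_space UNIV)"
    unfolding walk_prob_chapman_kolmogorov[OF assms, symmetric] one_sym Suc[of u]
    by (simp add: mult.commute)
  also have "\<dots> = ennreal (walk_prob E d (1 + k) v u)"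
    by (rule walk_prob_chapman_kolmogorov[OF assms])
  finally show ?case
    by (simp add: walk_prob_nonneg del: walk_prob.simps)
qed

lemma walk_prob_aut:
  assumes "graph_aut E \<phi>"
  shows "walk_prob E d k (\<phi> u) (\<phi> v) = walk_prob E d k u v"
proof (induction k arbitrary: v)
  case 0
  have "inj \<phi>" using assms by (simp add: graph_aut_def bij_def)
  then show ?case by (simp add: inj_eq)
next
  case (Suc k)
  have bij: "bij \<phi>" and E: "\<And>x y. E x y \<longleftrightarrow> E (\<phi> x) (\<phi> y)"
    using assms by (auto simp: graph_aut_def)
  have nbrs: "{w. E (\<phi> v) w} = \<phi> ` {x. E v x}"
    using E bij by (auto simp: bij_iff image_iff) (metis)
  have "inj_on \<phi> {x. E v x}" using bij by (meson bij_def inj_on_subset subset_UNIV)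
  then show ?case by (simp add: nbrs sum.reindex Suc)
qed

section \<open>The square root of the Green kernel\<close>

definition sqrt_coeff :: "nat \<Rightarrow> real" where
  "sqrt_coeff k = pochhammer (1/2) k / fact k"

lemma sqrt_coeff_nonneg: "0 \<le> sqrt_coeff k"
  unfolding sqrt_coeff_def by (intro divide_nonneg_nonneg pochhammer_nonneg) auto

lemma sqrt_coeff_convolution: "(\<Sum>i\<le>k. sqrt_coeff i * sqrt_coeff (k - i)) = 1"
proof -
  have "fact k = (\<Sum>i\<le>k. of_nat (k choose i) * pochhammer (1/2) i * pochhammer (1/2::real) (k - i))"
    using pochhammer_binomial_sum[of "1/2" "1/2::real" k] by (simp add: pochhammer_fact)
  also have "\<dots> = fact k * (\<Sum>i\<le>k. sqrt_coeff i * sqrt_coeff (k - i))"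
    by (auto simp: sum_distrib_left sqrt_coeff_def binomial_fact intro!: sum.cong)
  finally show ?thesis by simp
qed

lemma ennreal_suminf_cauchy_product:
  fixes a b h :: "nat \<Rightarrow> ennreal"
  shows "(\<Sum>i. \<Sum>j. a i * b j * h (i + j)) = (\<Sum>k. (\<Sum>i\<le>k. a i * b (k - i)) * h k)"
proof -
  define G where "G i k = (if i \<le> k then a i * b (k - i) * h k else 0)" for i k
  have shift: "(\<Sum>j. a i * b j * h (i + j)) = (\<Sum>k. G i k)" for i
  proof -
    have "bij_betw (\<lambda>j. j + i) UNIV {i..}"
      by (rule bij_betwI[where g="\<lambda>k. k - i"]) auto
    then have "(\<integral>\<^sup>+k. G i k \<partial>count_space {i..}) = (\<integral>\<^sup>+j. G i (j + i) \<partial>count_space UNIV)"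
      by (rule nn_integral_bij_count_space[symmetric])
    moreover have "(\<integral>\<^sup>+k. G i k \<partial>count_space UNIV) = (\<integral>\<^sup>+k. G i k \<partial>count_space {i..})"
      by (rule nn_integral_count_space_eq) (auto simp: G_def)
    ultimately show ?thesis
      by (simp add: nn_integral_count_space_nat G_def add.commute)
  qed
  have swap: "(\<Sum>i. \<Sum>k. G i k) = (\<Sum>k. \<Sum>i. G i k)"
    using nn_integral_count_space_nn_integral[of UNIV "\<lambda>k i. G i k" "count_space UNIV"]
    by (simp add: nn_integral_count_space_nat)
  have "(\<Sum>i. G i k) = (\<Sum>i\<le>k. a i * b (k - i)) * h k" for k
    by (subst suminf_finite[of "{..k}"]) (auto simp: G_def sum_distrib_right intro!: sum.cong)
  then show ?thesis using shift swap by simp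
qed

definition green_root_ennreal :: "('v \<Rightarrow> 'v \<Rightarrow> bool) \<Rightarrow> nat \<Rightarrow> 'v \<Rightarrow> 'v \<Rightarrow> ennreal" where
  "green_root_ennreal E d u w = (\<Sum>k. ennreal (sqrt_coeff k * walk_prob E d k u w))"

definition green_root :: "('v \<Rightarrow> 'v \<Rightarrow> bool) \<Rightarrow> nat \<Rightarrow> 'v \<Rightarrow> 'v \<Rightarrow> real" where
  "green_root E d u w = enn2real (green_root_ennreal E d u w)"

lemma green_root_aut:
  "graph_aut E \<phi> \<Longrightarrow> green_root E d (\<phi> u) (\<phi> w) = green_root E d u w"
  by (simp add: green_root_def green_root_ennreal_def walk_prob_aut)

lemma green_root_ennreal_inner:
  assumes "d_regular_graph E d"
  shows "(\<integral>\<^sup>+w. green_root_ennreal E d u w * green_root_ennreal E d v w \<partial>count_space UNIV)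
         = (\<Sum>k. ennreal (walk_prob E d k u v))"
proof -
  let ?p = "walk_prob E d" and ?c = "\<lambda>k. ennreal (sqrt_coeff k)"
  have expand: "ennreal (sqrt_coeff i * ?p i u w) * ennreal (sqrt_coeff j * ?p j v w)
        = ?c i * ?c j * ennreal (?p i u w * ?p j w v)" for i j w
    by (simp add: ennreal_mult sqrt_coeff_nonneg walk_prob_nonneg walk_prob_sym[OF assms, of j v] mult_ac)
  have "(\<integral>\<^sup>+w. green_root_ennreal E d u w * green_root_ennreal E d v w \<partial>count_space UNIV)
      = (\<integral>\<^sup>+w. (\<Sum>i. \<Sum>j. ?c i * ?c j * ennreal (?p i u w * ?p j w v)) \<partial>count_space UNIV)"
    unfolding green_root_ennreal_def
    by (simp add: expand[symmetric] ennreal_suminf_cmult ennreal_suminf_multc)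
  also have "\<dots> = (\<Sum>i. \<Sum>j. ?c i * ?c j * ennreal (?p (i + j) u v))"
    by (simp add: nn_integral_suminf nn_integral_cmult walk_prob_chapman_kolmogorov[OF assms])
  also have "\<dots> = (\<Sum>k. (\<Sum>i\<le>k. ?c i * ?c (k - i)) * ennreal (?p k u v))"
    by (rule ennreal_suminf_cauchy_product)
  also have "\<dots> = (\<Sum>k. ennreal (?p k u v))"
    by (simp add: ennreal_mult[symmetric] sqrt_coeff_nonneg sum_ennreal sqrt_coeff_convolution)
  finally show ?thesis .
qed

lemma ennreal_mult_le_squares: "(x::ennreal) * y \<le> x * x + y * y"
proof (cases "x = \<top> \<or> y = \<top>")
  case True then show ?thesis
    by (cases "x = 0"; cases "y = 0") (auto simp: ennreal_mult_top ennreal_top_mult)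
next
  case False
  then obtain a b where ab: "x = ennreal a" "y = ennreal b" "0 \<le> a" "0 \<le> b"
    by (metis ennreal_cases)
  have "0 \<le> (a - b)\<^sup>2" "0 \<le> a * b" using ab by auto
  then have "a * b \<le> a * a + b * b"
    by (simp add: power2_eq_square algebra_simps)
  then show ?thesis
    using ab by (simp add: ennreal_mult[symmetric] ennreal_plus[symmetric] ennreal_leI del: ennreal_plus)
qed

lemma green_ennreal_finite:
  assumes "d_regular_graph E d" "transient E d"
  shows "(\<Sum>k. ennreal (walk_prob E d k u v)) < \<infinity>"
proof -
  let ?b = "green_root_ennreal E d"
  have diag: "(\<Sum>k. ennreal (walk_prob E d k x x)) < \<infinity>" for x
    using assms(2) by (simp add: transient_def suminf_ennreal2 walk_prob_nonneg)
  have "(\<Sum>k. ennreal (walk_prob E d k u v)) = (\<integral>\<^sup>+w. ?b u w * ?b v w \<partial>count_space UNIV)"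
    by (rule green_root_ennreal_inner[OF assms(1), symmetric])
  also have "\<dots> \<le> (\<integral>\<^sup>+w. ?b u w * ?b u w + ?b v w * ?b v w \<partial>count_space UNIV)"
    by (intro nn_integral_mono ennreal_mult_le_squares)
  also have "\<dots> < \<infinity>"
    using diag[of u] diag[of v] by (simp add: nn_integral_add green_root_ennreal_inner[OF assms(1)])
  finally show ?thesis .
qed

lemma green_summable:
  assumes "d_regular_graph E d" "transient E d"
  shows "summable (\<lambda>k. walk_prob E d k u v)"
  using green_ennreal_finite[OF assms, of u v]
  by (intro summable_suminf_not_top) (auto simp: walk_prob_nonneg)

lemma green_nonneg:
  assumes "d_regular_graph E d" "transient E d"
  shows "0 \<le> green E d u v"
  unfolding green_def by (intro suminf_nonneg green_summable[OF assms] walk_prob_nonneg)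

lemma green_root_ennreal_finite:
  assumes "d_regular_graph E d" "transient E d"
  shows "green_root_ennreal E d u w < \<infinity>"
proof -
  let ?b = "green_root_ennreal E d"
  have "?b u w * ?b u w \<le> (\<integral>\<^sup>+w. ?b u w * ?b u w \<partial>count_space UNIV)"
    by (rule nn_integral_ge_point) simp
  also have "\<dots> < \<infinity>"
    using green_ennreal_finite[OF assms] by (simp add: green_root_ennreal_inner[OF assms(1)])
  finally show ?thesis by (auto simp: ennreal_mult_less_top)
qed

lemma has_sum_nn_integral_count_space:
  fixes f :: "'a \<Rightarrow> real"
  assumes "\<And>x. 0 \<le> f x" "(\<integral>\<^sup>+x. ennreal (f x) \<partial>count_space UNIV) = ennreal s" "0 \<le> s"
  shows "(f has_sum s) UNIV"
proof -
  have "integrable (count_space UNIV) f"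
    using assms by (intro integrableI_bounded) auto
  then have abs: "Infinite_Set_Sum.abs_summable_on f UNIV"
    by (simp add: Infinite_Set_Sum.abs_summable_on_def)
  then have "f summable_on UNIV"
    using abs_summable_equivalent abs_summable_summable by blast
  moreover have "infsetsum f UNIV = s"
    using assms by (subst infsetsum_conv_nn_integral) auto
  ultimately show ?thesis
    using infsetsum_infsum[OF abs] by (metis has_sum_infsum)
qed

lemma green_root_has_sum:
  assumes "d_regular_graph E d" "transient E d"
  shows "((\<lambda>w. green_root E d u w * green_root E d v w) has_sum green E d u v) UNIV"
proof (rule has_sum_nn_integral_count_space)
  have "ennreal (green_root E d u w * green_root E d v w)
        = green_root_ennreal E d u w * green_root_ennreal E d v w" for w
    using green_root_ennreal_finite[OF assms]
    by (simp add: green_root_def ennreal_mult)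
  then show "(\<integral>\<^sup>+w. ennreal (green_root E d u w * green_root E d v w) \<partial>count_space UNIV)
      = ennreal (green E d u v)"
    by (simp add: green_def green_root_ennreal_inner[OF assms(1)] suminf_ennreal2
        walk_prob_nonneg green_summable[OF assms])
qed (auto simp: green_root_def green_nonneg[OF assms])

section \<open>Series in an orthonormal family\<close>

definition orthonormal :: "'w measure \<Rightarrow> ('v \<Rightarrow> 'w \<Rightarrow> real) \<Rightarrow> bool" where
  "orthonormal M W \<longleftrightarrow> (\<forall>u. W u \<in> borel_measurable M) \<and>
     (\<forall>u w. integrable M (\<lambda>x. W u x * W w x) \<and> (\<integral>x. W u x * W w x \<partial>M) = (if u = w then 1 else 0))"

lemma iid_std_normal_measurable: "iid_std_normal M Z \<Longrightarrow> Z u \<in> borel_measurable M"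
  unfolding iid_std_normal_def using distributed_measurable[of M lborel "Z u"] by auto

lemma iid_std_normal_moments:
  assumes "iid_std_normal M Z"
  shows "integrable M (Z u)" "(\<integral>x. Z u x \<partial>M) = 0"
    "integrable M (\<lambda>x. Z u x * Z u x)" "(\<integral>x. Z u x * Z u x \<partial>M) = 1"
proof -
  have D: "distributed M lborel (Z u) std_normal_density" and P: "prob_space M"
    using assms by (auto simp: iid_std_normal_def)
  show "integrable M (Z u)"
    using distributed_integrable_var[OF D] integrable_std_normal_moment[of 1] by simp
  show "(\<integral>x. Z u x \<partial>M) = 0"
    using prob_space.standard_normal_distributed_expectation[OF P D] .
  show "integrable M (\<lambda>x. Z u x * Z u x)"
    using distributed_integrable[OF D, of "\<lambda>x. x * x"] integrable_std_normal_moment[of 2]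
    by (simp add: power2_eq_square)
  show "(\<integral>x. Z u x * Z u x \<partial>M) = 1"
    using distributed_integral[OF D, of "\<lambda>x. x * x"] integral_std_normal_moment_even[of 1]
    by (simp add: power2_eq_square)
qed

lemma orthonormal_iid_std_normal:
  assumes I: "iid_std_normal M Z" and "inj f"
  shows "orthonormal M (\<lambda>u. Z (f u))"
proof -
  have P: "prob_space M" and Ind: "prob_space.indep_vars M (\<lambda>_. borel) Z UNIV"
    using I by (auto simp: iid_std_normal_def)
  have "integrable M (\<lambda>x. Z (f u) x * Z (f w) x) \<and> (\<integral>x. Z (f u) x * Z (f w) x \<partial>M) = 0"
    if "u \<noteq> w" for u w
  proof -
    have ne: "f u \<noteq> f w" using that \<open>inj f\<close> by (auto simp: inj_eq)
    have Ind2: "prob_space.indep_vars M (\<lambda>_. borel) Z {f u, f w}"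
      using prob_space.indep_vars_subset[OF P Ind] by auto
    have "integrable M (\<lambda>x. \<Prod>i\<in>{f u, f w}. Z i x)"
      "(\<integral>x. (\<Prod>i\<in>{f u, f w}. Z i x) \<partial>M) = (\<Prod>i\<in>{f u, f w}. \<integral>x. Z i x \<partial>M)"
      by (auto intro!: prob_space.indep_vars_integrable[OF P _ Ind2]
          prob_space.indep_vars_lebesgue_integral[OF P _ Ind2] iid_std_normal_moments[OF I])
    then show ?thesis using ne by (simp add: iid_std_normal_moments[OF I])
  qed
  then show ?thesis
    unfolding orthonormal_def using iid_std_normal_measurable[OF I] iid_std_normal_moments[OF I]
    by auto
qed

lemma nn_integral_orthonormal_sum_sq:
  assumes "orthonormal M W" "finite H"
  shows "(\<integral>\<^sup>+x. ennreal ((\<Sum>w\<in>H. c w * W w x)\<^sup>2) \<partial>M) = ennreal (\<Sum>w\<in>H. (c w)\<^sup>2)"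
proof -
  have sq: "(\<Sum>w\<in>H. c w * W w x)\<^sup>2 = (\<Sum>u\<in>H. \<Sum>w\<in>H. c u * c w * (W u x * W w x))" for x
    by (simp add: power2_eq_square sum_product mult_ac)
  have int: "integrable M (\<lambda>x. W u x * W w x)" for u w
    using assms(1) by (simp add: orthonormal_def)
  have "(\<integral>x. (\<Sum>w\<in>H. c w * W w x)\<^sup>2 \<partial>M) = (\<Sum>u\<in>H. \<Sum>w\<in>H. c u * c w * (if u = w then 1 else 0))"
    using assms(1) unfolding sq by (simp add: int orthonormal_def)
  also have "\<dots> = (\<Sum>w\<in>H. (c w)\<^sup>2)"
    using assms(2) by (simp add: power2_eq_square if_distrib[of "\<lambda>x. _ * x"] sum.delta cong: if_cong)
  finally have "(\<integral>x. (\<Sum>w\<in>H. c w * W w x)\<^sup>2 \<partial>M) = (\<Sum>w\<in>H. (c w)\<^sup>2)" .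
  moreover have "integrable M (\<lambda>x. (\<Sum>w\<in>H. c w * W w x)\<^sup>2)"
    unfolding sq by (auto intro!: integrable_sum integrable_mult_right int)
  ultimately show ?thesis
    by (simp add: nn_integral_eq_integral)
qed

text \<open>The difference of the two partial sums is a sum over their symmetric difference, which is
  disjoint from \<open>K\<close>.\<close>

lemma nn_integral_orthonormal_sum_diff:
  assumes O: "orthonormal M W" and fin: "finite A" "finite B" and K: "K \<subseteq> A" "K \<subseteq> B"
    and tail: "\<And>F. finite F \<Longrightarrow> F \<inter> K = {} \<Longrightarrow> (\<Sum>w\<in>F. (c w)\<^sup>2) < t"
  shows "(\<integral>\<^sup>+x. ennreal (((\<Sum>w\<in>A. c w * W w x) - (\<Sum>w\<in>B. c w * W w x))\<^sup>2) \<partial>M) \<le> ennreal t"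
proof -
  define e where "e w = (if w \<in> A then c w else 0) - (if w \<in> B then c w else 0)" for w
  have "(\<Sum>w\<in>A. c w * W w x) - (\<Sum>w\<in>B. c w * W w x) = (\<Sum>w\<in>A \<union> B. e w * W w x)" for x
    using fin by (simp add: e_def left_diff_distrib sum_subtractf if_distrib[of "\<lambda>y. y * _"]
        sum.If_cases Int_absorb2)
  moreover have "(\<Sum>w\<in>A \<union> B. (e w)\<^sup>2) = (\<Sum>w\<in>(A \<union> B) - K. (e w)\<^sup>2)"
    using fin K by (intro sum.mono_neutral_right) (auto simp: e_def)
  moreover have "\<dots> \<le> (\<Sum>w\<in>(A \<union> B) - K. (c w)\<^sup>2)"
    by (intro sum_mono) (auto simp: e_def)
  moreover have "\<dots> < t"
    using fin by (intro tail) auto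
  ultimately show ?thesis
    using fin by (simp add: nn_integral_orthonormal_sum_sq[OF O] ennreal_leI)
qed

lemma nn_integral_abs_le_of_nn_integral_sq:
  assumes "prob_space M" "D \<in> borel_measurable M"
    and "(\<integral>\<^sup>+x. ennreal ((D x)\<^sup>2) \<partial>M) \<le> ennreal (e\<^sup>2)" "0 < e"
  shows "(\<integral>\<^sup>+x. ennreal \<bar>D x\<bar> \<partial>M) \<le> ennreal e"
proof -
  have pointwise: "ennreal \<bar>y\<bar> \<le> ennreal (y\<^sup>2) * ennreal (1 / (2 * e)) + ennreal (e / 2)" for y
  proof -
    have "0 \<le> (\<bar>y\<bar> - e)\<^sup>2" by simp
    then have "\<bar>y\<bar> \<le> y\<^sup>2 * (1 / (2 * e)) + e / 2"
      using \<open>0 < e\<close> by (simp add: field_simps power2_eq_square)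
    then show ?thesis
      using \<open>0 < e\<close> by (simp add: ennreal_mult[symmetric] ennreal_plus[symmetric] ennreal_leI
          del: ennreal_plus)
  qed
  have "(\<integral>\<^sup>+x. ennreal \<bar>D x\<bar> \<partial>M)
      \<le> (\<integral>\<^sup>+x. ennreal ((D x)\<^sup>2) * ennreal (1 / (2 * e)) + ennreal (e / 2) \<partial>M)"
    by (intro nn_integral_mono pointwise)
  also have "\<dots> = (\<integral>\<^sup>+x. ennreal ((D x)\<^sup>2) \<partial>M) * ennreal (1 / (2 * e)) + ennreal (e / 2)"
    using assms(1,2) by (simp add: nn_integral_add nn_integral_multc prob_space.emeasure_space_1)
  also have "\<dots> \<le> ennreal (e\<^sup>2) * ennreal (1 / (2 * e)) + ennreal (e / 2)"
    by (intro add_mono mult_right_mono assms(3)) auto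
  also have "\<dots> = ennreal e"
    using \<open>0 < e\<close>
    by (simp add: ennreal_mult[symmetric] ennreal_plus[symmetric] power2_eq_square field_simps
        del: ennreal_plus)
  finally show ?thesis .
qed

lemma summable_on_tail:
  fixes f :: "'a \<Rightarrow> real"
  assumes "f summable_on UNIV" "0 < e"
  shows "\<exists>K. finite K \<and> (\<forall>F. finite F \<and> F \<inter> K = {} \<longrightarrow> \<bar>sum f F\<bar> < e)"
proof -
  have "(sum f \<longlongrightarrow> infsum f UNIV) (finite_subsets_at_top UNIV)"
    using assms(1) by (simp add: has_sum_def[symmetric])
  from tendstoD[OF this, of "e / 2"] obtain K where K: "finite K"
    "\<And>F. finite F \<Longrightarrow> K \<subseteq> F \<Longrightarrow> dist (sum f F) (infsum f UNIV) < e / 2"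
    using assms(2) by (auto simp: eventually_finite_subsets_at_top)
  have "\<bar>sum f F\<bar> < e" if "finite F" "F \<inter> K = {}" for F
  proof -
    have "sum f (K \<union> F) = sum f K + sum f F"
      using that K(1) by (simp add: sum.union_disjoint Int_commute)
    then show ?thesis
      using K(2)[of "K \<union> F"] K(2)[of K] that K(1) by (simp add: dist_real_def) (smt (verit))
  qed
  then show ?thesis using K(1) by blast
qed

lemma AE_convergent_of_summable_increments:
  assumes [measurable]: "\<And>n. S n \<in> borel_measurable M"
    and incr: "\<And>n. (\<integral>\<^sup>+x. ennreal \<bar>S (Suc n) x - S n x\<bar> \<partial>M) \<le> ennreal (q n)"
    and "summable q" "\<And>n. 0 \<le> q n"
  shows "AE x in M. convergent (\<lambda>n. S n x)"
proof -
  have "(\<integral>\<^sup>+x. (\<Sum>n. ennreal \<bar>S (Suc n) x - S n x\<bar>) \<partial>M) \<le> (\<Sum>n. ennreal (q n))"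
    by (subst nn_integral_suminf) (auto intro!: suminf_le incr)
  also have "\<dots> < \<infinity>"
    using assms(3,4) by (simp add: suminf_ennreal2)
  finally have "AE x in M. (\<Sum>n. ennreal \<bar>S (Suc n) x - S n x\<bar>) \<noteq> \<infinity>"
    by (intro nn_integral_PInf_AE) auto
  then show ?thesis
  proof (rule AE_mp, intro AE_I2 impI)
    fix x assume "(\<Sum>n. ennreal \<bar>S (Suc n) x - S n x\<bar>) \<noteq> \<infinity>"
    then have "summable (\<lambda>n. \<bar>S (Suc n) x - S n x\<bar>)"
      by (intro summable_suminf_not_top) auto
    then have "convergent (\<lambda>m. \<Sum>n<m. S (Suc n) x - S n x)"
      by (simp add: summable_rabs_cancel summable_iff_convergent[symmetric])
    then have "convergent (\<lambda>m. (S m x - S 0 x) + S 0 x)"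
      using sum_lessThan_telescope[of "\<lambda>n. S n x"] by (intro convergent_add convergent_const) simp
    then show "convergent (\<lambda>n. S n x)"
      by simp
  qed
qed

lemma nn_integral_sq_le_of_AE_tendsto:
  assumes [measurable]: "\<And>n. S n \<in> borel_measurable M" "T \<in> borel_measurable M"
    and lim: "AE x in M. (\<lambda>n. S n x) \<longlonglongrightarrow> Y x"
    and bound: "eventually (\<lambda>n. (\<integral>\<^sup>+x. ennreal ((S n x - T x)\<^sup>2) \<partial>M) \<le> b) sequentially"
  shows "(\<integral>\<^sup>+x. ennreal ((Y x - T x)\<^sup>2) \<partial>M) \<le> b"
proof -
  have "AE x in M. ennreal ((Y x - T x)\<^sup>2) = liminf (\<lambda>n. ennreal ((S n x - T x)\<^sup>2))"
    using lim by eventually_elim (intro lim_imp_Liminf[symmetric] tendsto_ennrealI tendsto_intros, auto)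
  then have "(\<integral>\<^sup>+x. ennreal ((Y x - T x)\<^sup>2) \<partial>M)
      = (\<integral>\<^sup>+x. liminf (\<lambda>n. ennreal ((S n x - T x)\<^sup>2)) \<partial>M)"
    by (rule nn_integral_cong_AE)
  also have "\<dots> \<le> liminf (\<lambda>n. \<integral>\<^sup>+x. ennreal ((S n x - T x)\<^sup>2) \<partial>M)"
    by (rule nn_integral_liminf) simp
  also have "\<dots> \<le> b"
    using bound by (intro order.trans[OF Liminf_le_Limsup Limsup_bounded]) simp_all
  finally show ?thesis .
qed

text \<open>Riesz--Fischer for an orthonormal family: along an increasing sequence of finite sets \<open>K n\<close>
  whose complements carry \<open>\<Sum> c\<^sup>2 < 4\<^sup>-\<^sup>n\<close>, the partial sums have \<open>L\<^sup>1\<close>-increments \<open>\<le> 2\<^sup>-\<^sup>n\<close>, so they converge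
  almost surely, and Fatou's lemma turns the limit into the \<open>L\<^sup>2\<close>-sum.\<close>

lemma L2_series_exists:
  assumes P: "prob_space M" and O: "orthonormal M W" and S: "(\<lambda>u. (c u)\<^sup>2) summable_on UNIV"
  shows "\<exists>Y. L2_series M c W Y"
proof -
  define q :: "nat \<Rightarrow> real" where "q n = (1/2)^n" for n
  have q_pos: "0 < q n" for n by (simp add: q_def)
  have "\<forall>n. \<exists>H. finite H \<and> (\<forall>F. finite F \<and> F \<inter> H = {} \<longrightarrow> \<bar>\<Sum>w\<in>F. (c w)\<^sup>2\<bar> < (q n)\<^sup>2)"
    using summable_on_tail[OF S] q_pos by (metis zero_less_power)
  then obtain H where H: "\<And>n. finite (H n)"
    "\<And>n F. finite F \<Longrightarrow> F \<inter> H n = {} \<Longrightarrow> \<bar>\<Sum>w\<in>F. (c w)\<^sup>2\<bar> < (q n)\<^sup>2"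
    by metis
  define K where "K n = (\<Union>m\<le>n. H m)" for n
  have K_finite: "finite (K n)" for n using H(1) by (simp add: K_def)
  have K_mono: "n \<le> m \<Longrightarrow> K n \<subseteq> K m" for n m unfolding K_def by (intro UN_mono) auto
  have K_tail: "(\<Sum>w\<in>F. (c w)\<^sup>2) < (q n)\<^sup>2" if "finite F" "F \<inter> K n = {}" for F n
    using H(2)[of F n] that by (force simp: K_def)
  have [measurable]: "W u \<in> borel_measurable M" for u using O by (simp add: orthonormal_def)
  define S where "S n x = (\<Sum>w\<in>K n. c w * W w x)" for n x
  have S_measurable[measurable]: "S n \<in> borel_measurable M" for n unfolding S_def by measurable
  have S_close: "(\<integral>\<^sup>+x. ennreal ((S m x - (\<Sum>w\<in>F. c w * W w x))\<^sup>2) \<partial>M) \<le> ennreal ((q N)\<^sup>2)"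
    if "finite F" "K N \<subseteq> F" "N \<le> m" for m N F
    unfolding S_def using K_mono[OF that(3)] that
    by (intro nn_integral_orthonormal_sum_diff[OF O K_finite] K_tail) auto
  have "(\<integral>\<^sup>+x. ennreal \<bar>S (Suc n) x - S n x\<bar> \<partial>M) \<le> ennreal (q n)" for n
    using S_close[where m="Suc n" and N=n and F="K n"] K_finite
    by (intro nn_integral_abs_le_of_nn_integral_sq[OF P _ _ q_pos]) (simp_all add: S_def)
  then have "AE x in M. convergent (\<lambda>n. S n x)"
    by (rule AE_convergent_of_summable_increments[OF S_measurable])
      (auto simp: q_def intro: less_imp_le)
  then have lim: "AE x in M. (\<lambda>n. S n x) \<longlonglongrightarrow> lim (\<lambda>n. S n x)"
    by (simp add: convergent_LIMSEQ_iff)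
  have "L2_series M c W (\<lambda>x. lim (\<lambda>n. S n x))"
    unfolding L2_series_def
  proof (intro conjI allI impI)
    show "(\<lambda>x. lim (\<lambda>n. S n x)) \<in> borel_measurable M" by measurable
    fix \<epsilon> :: real assume "0 < \<epsilon>"
    obtain N where N: "(q N)\<^sup>2 < \<epsilon>"
      using real_arch_pow_inv[OF \<open>0 < \<epsilon>\<close>, of "1/4"]
      by (auto simp: q_def power_mult_distrib[symmetric] power2_eq_square)
    have "(\<integral>\<^sup>+x. ennreal ((lim (\<lambda>n. S n x) - (\<Sum>u\<in>F. c u * W u x))\<^sup>2) \<partial>M) < ennreal \<epsilon>"
      if "finite F" "K N \<subseteq> F" for F
    proof -
      have "(\<integral>\<^sup>+x. ennreal ((lim (\<lambda>n. S n x) - (\<Sum>u\<in>F. c u * W u x))\<^sup>2) \<partial>M) \<le> ennreal ((q N)\<^sup>2)"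
        using that by (intro nn_integral_sq_le_of_AE_tendsto[OF S_measurable _ lim]
            eventually_sequentiallyI[of N] S_close) auto
      then show ?thesis using N \<open>0 < \<epsilon>\<close> by (simp add: ennreal_lessI le_less_trans)
    qed
    then show "\<exists>F0. finite F0 \<and> (\<forall>F. finite F \<and> F0 \<subseteq> F \<longrightarrow>
        (\<integral>\<^sup>+x. ennreal ((lim (\<lambda>n. S n x) - (\<Sum>u\<in>F. c u * W u x))\<^sup>2) \<partial>M) < ennreal \<epsilon>)"
      using K_finite by blast
  qed
  then show ?thesis by blast
qed

section \<open>Limits of Gaussian sums\<close>

lemma L2_series_iff_eventually:
  "L2_series M c Z Y \<longleftrightarrow> Y \<in> borel_measurable M \<and> (\<forall>\<epsilon>>0.
     eventually (\<lambda>F. (\<integral>\<^sup>+\<omega>. ennreal ((Y \<omega> - (\<Sum>u\<in>F. c u * Z u \<omega>))\<^sup>2) \<partial>M) < ennreal \<epsilon>)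
       (finite_subsets_at_top UNIV))"
  unfolding L2_series_def eventually_finite_subsets_at_top by simp

lemma cmod_iexp_diff_le: "cmod (iexp a - iexp b) \<le> \<bar>a - b\<bar>"
proof -
  have "iexp a - iexp b = iexp b * (iexp (a - b) - 1)"
    by (simp add: algebra_simps exp_diff)
  then have "cmod (iexp a - iexp b) = cmod (iexp (a - b) - 1)"
    by (simp add: norm_mult norm_exp_i_times)
  also have "\<dots> \<le> \<bar>a - b\<bar>"
    using iexp_approx1[of "a - b" 0] by simp
  finally show ?thesis .
qed

lemma real_distribution_centered_normal:
  "0 \<le> s \<Longrightarrow> real_distribution (centered_normal s)"
  by (auto simp: real_distribution_def real_distribution_axioms_def centered_normal_def
      prob_space_return prob_space_normal_density)

lemma char_distr_scaled_std_normal: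
  assumes P: "prob_space M" and D: "distributed M lborel Z std_normal_density"
  shows "char (distr M borel (\<lambda>\<omega>. a * Z \<omega>)) t = complex_of_real (exp (- ((t * a)\<^sup>2) / 2))"
proof -
  have [measurable]: "Z \<in> borel_measurable M" using distributed_measurable[OF D] by simp
  have "char (distr M borel (\<lambda>\<omega>. a * Z \<omega>)) t = (CLINT x|distr M lborel Z. iexp ((t * a) * x))"
    by (simp add: char_def integral_distr mult.assoc)
  also have "\<dots> = char std_normal_distribution (t * a)"
    using D by (simp add: distributed_def char_def)
  finally show ?thesis by (simp add: char_std_normal_distribution)
qed

lemma char_centered_normal:
  assumes "0 \<le> s"
  shows "char (centered_normal s) t = complex_of_real (exp (- (s * t\<^sup>2) / 2))"
proof (cases "s = 0")
  case True
  have "(\<lambda>x. iexp (t * x)) \<in> borel_measurable borel" by measurable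
  then show ?thesis using True by (simp add: centered_normal_def char_def integral_return)
next
  case False
  then have sp: "0 < sqrt s" using assms by simp
  let ?N = "std_normal_distribution"
  have P: "prob_space ?N" using prob_space_normal_density[of 1 0] by simp
  have D: "distributed ?N lborel (\<lambda>x. x) std_normal_density"
    unfolding distributed_def by (auto simp: distr_id2)
  have "distributed ?N lborel (\<lambda>x. 0 + sqrt s * x) (normal_density (0 + sqrt s * 0) (\<bar>sqrt s\<bar> * 1))"
    using sp by (intro prob_space.normal_density_affine[OF P D]) auto
  then have "centered_normal s = distr ?N lborel (\<lambda>x. sqrt s * x)"
    using sp False by (simp add: distributed_def centered_normal_def)
  then have "char (centered_normal s) t = char (distr ?N borel (\<lambda>x. sqrt s * x)) t"
    by (simp add: char_def integral_distr)
  also have "\<dots> = complex_of_real (exp (- ((t * sqrt s)\<^sup>2) / 2))"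
    by (rule char_distr_scaled_std_normal[OF P D])
  finally show ?thesis using assms by (simp add: power_mult_distrib mult.commute)
qed

lemma char_iid_std_normal_sum:
  assumes I: "iid_std_normal M Z" and "finite H"
  shows "char (distr M borel (\<lambda>\<omega>. \<Sum>w\<in>H. g w * Z w \<omega>)) t
         = complex_of_real (exp (- (t\<^sup>2 * (\<Sum>w\<in>H. (g w)\<^sup>2)) / 2))"
proof -
  have P: "prob_space M" and Ind: "prob_space.indep_vars M (\<lambda>_. borel) Z UNIV"
    and D: "\<And>u. distributed M lborel (Z u) std_normal_density"
    using I by (auto simp: iid_std_normal_def)
  have "prob_space.indep_vars M (\<lambda>_. borel) (\<lambda>w \<omega>. g w * Z w \<omega>) H"
    using prob_space.indep_vars_compose2[OF P prob_space.indep_vars_subset[OF P Ind],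
        of H "\<lambda>w x. g w * x" "\<lambda>_. borel"]
    by simp
  then have "char (distr M borel (\<lambda>\<omega>. \<Sum>w\<in>H. g w * Z w \<omega>)) t
      = (\<Prod>w\<in>H. char (distr M borel (\<lambda>\<omega>. g w * Z w \<omega>)) t)"
    by (rule prob_space.char_distr_sum[OF P])
  also have "\<dots> = complex_of_real (exp (\<Sum>w\<in>H. - ((t * g w)\<^sup>2) / 2))"
    using \<open>finite H\<close> by (simp add: char_distr_scaled_std_normal[OF P D] exp_sum)
  finally show ?thesis
    by (simp add: power_mult_distrib sum_distrib_left sum_divide_distrib[symmetric] sum_negf)
qed

lemma char_distr_diff_le:
  assumes P: "prob_space M" and [measurable]: "Y \<in> borel_measurable M" "T \<in> borel_measurable M"
    and L2: "(\<integral>\<^sup>+x. ennreal ((Y x - T x)\<^sup>2) \<partial>M) \<le> ennreal (e\<^sup>2)" and "0 < e"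
  shows "norm (char (distr M borel Y) t - char (distr M borel T) t) \<le> \<bar>t\<bar> * e"
proof -
  have int: "integrable M (\<lambda>x. iexp (t * Y x))" "integrable M (\<lambda>x. iexp (t * T x))"
    by (auto intro!: prob_space.integrable_iexp[OF P])
  have "char (distr M borel Y) t - char (distr M borel T) t = (CLINT x|M. iexp (t * Y x) - iexp (t * T x))"
    using int by (simp add: char_def integral_distr)
  then have "ennreal (norm (char (distr M borel Y) t - char (distr M borel T) t))
      \<le> (\<integral>\<^sup>+x. ennreal (norm (iexp (t * Y x) - iexp (t * T x))) \<partial>M)"
    using integral_norm_bound_ennreal[OF Bochner_Integration.integrable_diff[OF int]] by simp
  also have "\<dots> \<le> (\<integral>\<^sup>+x. ennreal \<bar>t\<bar> * ennreal \<bar>Y x - T x\<bar> \<partial>M)"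
    using cmod_iexp_diff_le[of "t * Y _" "t * T _"]
    by (intro nn_integral_mono)
      (simp add: ennreal_mult[symmetric] ennreal_leI abs_mult[symmetric] right_diff_distrib)
  also have "\<dots> \<le> ennreal \<bar>t\<bar> * ennreal e"
    by (simp add: nn_integral_cmult mult_left_mono
        nn_integral_abs_le_of_nn_integral_sq[OF P _ L2 \<open>0 < e\<close>])
  finally show ?thesis
    using \<open>0 < e\<close> by (simp add: ennreal_mult[symmetric] ennreal_le_iff)
qed

lemma distr_L2_series_centered_normal:
  assumes I: "iid_std_normal M Z" and Y: "L2_series M g Z Y"
    and s: "((\<lambda>w. (g w)\<^sup>2) has_sum s) UNIV"
  shows "distr M borel Y = centered_normal s"
proof -
  let ?F = "finite_subsets_at_top UNIV"
  let ?S = "\<lambda>H \<omega>. \<Sum>w\<in>H. g w * Z w \<omega>"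
  have P: "prob_space M" using I by (simp add: iid_std_normal_def)
  have [measurable]: "Z u \<in> borel_measurable M" for u by (rule iid_std_normal_measurable[OF I])
  have [measurable]: "Y \<in> borel_measurable M" using Y by (simp add: L2_series_iff_eventually)
  have s_nonneg: "0 \<le> s" using s by (rule has_sum_nonneg) simp
  have "char (distr M borel Y) t = char (centered_normal s) t" for t
  proof -
    have "eventually (\<lambda>H. char (distr M borel (?S H)) t
        = complex_of_real (exp (- (t\<^sup>2 * sum (\<lambda>w. (g w)\<^sup>2) H) / 2))) ?F"
      by (rule eventually_finite_subsets_at_top_weakI) (simp add: char_iid_std_normal_sum[OF I])
    then have "((\<lambda>H. char (distr M borel (?S H)) t) \<longlongrightarrow> complex_of_real (exp (- (t\<^sup>2 * s) / 2))) ?F"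
      using s unfolding has_sum_def by (subst tendsto_cong) (auto intro!: tendsto_intros)
    moreover have "((\<lambda>H. char (distr M borel (?S H)) t) \<longlongrightarrow> char (distr M borel Y) t) ?F"
    proof (rule tendstoI)
      fix e :: real assume "0 < e"
      define \<delta> where "\<delta> = e / (\<bar>t\<bar> + 1)"
      have \<delta>: "0 < \<delta>" "\<bar>t\<bar> * \<delta> < e"
        using \<open>0 < e\<close> by (auto simp: \<delta>_def field_simps)
      have "eventually (\<lambda>H. (\<integral>\<^sup>+\<omega>. ennreal ((Y \<omega> - ?S H \<omega>)\<^sup>2) \<partial>M) < ennreal (\<delta>\<^sup>2)) ?F"
        using Y \<delta> by (simp add: L2_series_iff_eventually)
      then show "eventually (\<lambda>H. dist (char (distr M borel (?S H)) t) (char (distr M borel Y) t) < e) ?F"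
      proof eventually_elim
        case (elim H)
        then have "norm (char (distr M borel Y) t - char (distr M borel (?S H)) t) \<le> \<bar>t\<bar> * \<delta>"
          using \<delta> by (intro char_distr_diff_le[OF P]) auto
        then show ?case using \<delta> by (simp add: dist_norm norm_minus_commute)
      qed
    qed
    ultimately have "char (distr M borel Y) t = complex_of_real (exp (- (t\<^sup>2 * s) / 2))"
      by (rule tendsto_unique[OF finite_subsets_at_top_neq_bot, rotated])
    then show ?thesis
      by (simp add: char_centered_normal[OF s_nonneg] mult.commute)
  qed
  then show ?thesis
    by (intro Levy_uniqueness prob_space.real_distribution_distr[OF P]
        real_distribution_centered_normal s_nonneg) auto
qed

section \<open>The Gaussian free field\<close>

lemma has_sum_sum:
  fixes f :: "'i \<Rightarrow> 'a \<Rightarrow> 'b::topological_comm_monoid_add"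
  assumes "finite I" "\<And>i. i \<in> I \<Longrightarrow> (f i has_sum s i) A"
  shows "((\<lambda>x. \<Sum>i\<in>I. f i x) has_sum (\<Sum>i\<in>I. s i)) A"
proof -
  have "sum (\<lambda>x. \<Sum>i\<in>I. f i x) = (\<lambda>X. \<Sum>i\<in>I. sum (f i) X)"
    by (rule ext) (rule sum.swap)
  then show ?thesis
    using assms by (simp add: has_sum_def tendsto_sum)
qed

lemma nn_integral_sq_sum_le:
  fixes a :: "'v \<Rightarrow> real"
  assumes "finite F" "\<And>v. v \<in> F \<Longrightarrow> D v \<in> borel_measurable M"
  shows "(\<integral>\<^sup>+x. ennreal ((\<Sum>v\<in>F. a v * D v x)\<^sup>2) \<partial>M)
         \<le> ennreal (\<Sum>v\<in>F. (a v)\<^sup>2) * (\<Sum>v\<in>F. \<integral>\<^sup>+x. ennreal ((D v x)\<^sup>2) \<partial>M)"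
proof -
  have "ennreal ((\<Sum>v\<in>F. a v * D v x)\<^sup>2) \<le> ennreal (\<Sum>v\<in>F. (a v)\<^sup>2) * (\<Sum>v\<in>F. ennreal ((D v x)\<^sup>2))" for x
    using Cauchy_Schwarz_ineq_sum[of a "\<lambda>v. D v x" F]
    by (simp add: ennreal_mult[symmetric] sum_nonneg sum_ennreal ennreal_leI)
  then have "(\<integral>\<^sup>+x. ennreal ((\<Sum>v\<in>F. a v * D v x)\<^sup>2) \<partial>M)
      \<le> (\<integral>\<^sup>+x. ennreal (\<Sum>v\<in>F. (a v)\<^sup>2) * (\<Sum>v\<in>F. ennreal ((D v x)\<^sup>2)) \<partial>M)"
    by (rule nn_integral_mono)
  also have "\<dots> = ennreal (\<Sum>v\<in>F. (a v)\<^sup>2) * (\<Sum>v\<in>F. \<integral>\<^sup>+x. ennreal ((D v x)\<^sup>2) \<partial>M)"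
    using assms by (simp add: nn_integral_cmult nn_integral_sum del: sum_ennreal)
  finally show ?thesis .
qed

lemma L2_series_sum:
  fixes a :: "'v \<Rightarrow> real"
  assumes "finite F" and Z: "\<And>u. Z u \<in> borel_measurable M"
    and X: "\<And>v. v \<in> F \<Longrightarrow> L2_series M (c v) Z (X v)"
  shows "L2_series M (\<lambda>u. \<Sum>v\<in>F. a v * c v u) Z (\<lambda>\<omega>. \<Sum>v\<in>F. a v * X v \<omega>)"
  unfolding L2_series_iff_eventually
proof (intro conjI allI impI)
  have X_measurable: "X v \<in> borel_measurable M" if "v \<in> F" for v
    using X[OF that] by (simp add: L2_series_iff_eventually)
  show "(\<lambda>\<omega>. \<Sum>v\<in>F. a v * X v \<omega>) \<in> borel_measurable M"
    using X_measurable by measurable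
  have residual_measurable: "(\<lambda>\<omega>. X v \<omega> - (\<Sum>u\<in>H. c v u * Z u \<omega>)) \<in> borel_measurable M"
    if "v \<in> F" for v H
    using X_measurable[OF that] Z by measurable
  fix \<epsilon> :: real assume "0 < \<epsilon>"
  define A where "A = (\<Sum>v\<in>F. (a v)\<^sup>2)"
  define \<delta> where "\<delta> = \<epsilon> / (A * card F + 1)"
  have "0 \<le> A" by (simp add: A_def sum_nonneg)
  then have denom: "0 < A * card F + 1" by (simp add: add_nonneg_pos)
  then have \<delta>_pos: "0 < \<delta>" using \<open>0 < \<epsilon>\<close> by (simp add: \<delta>_def)
  have \<delta>_small: "A * (card F * \<delta>) < \<epsilon>"
    using denom \<delta>_pos by (simp add: \<delta>_def field_simps)
  have "eventually (\<lambda>H. \<forall>v\<in>F. (\<integral>\<^sup>+\<omega>. ennreal ((X v \<omega> - (\<Sum>u\<in>H. c v u * Z u \<omega>))\<^sup>2) \<partial>M)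
      < ennreal \<delta>) (finite_subsets_at_top UNIV)"
    using X \<delta>_pos \<open>finite F\<close> by (simp add: eventually_ball_finite L2_series_iff_eventually)
  then show "eventually (\<lambda>H. (\<integral>\<^sup>+\<omega>. ennreal (((\<Sum>v\<in>F. a v * X v \<omega>)
      - (\<Sum>u\<in>H. (\<Sum>v\<in>F. a v * c v u) * Z u \<omega>))\<^sup>2) \<partial>M) < ennreal \<epsilon>) (finite_subsets_at_top UNIV)"
  proof eventually_elim
    case (elim H)
    have residual: "(\<Sum>v\<in>F. a v * X v \<omega>) - (\<Sum>u\<in>H. (\<Sum>v\<in>F. a v * c v u) * Z u \<omega>)
        = (\<Sum>v\<in>F. a v * (X v \<omega> - (\<Sum>u\<in>H. c v u * Z u \<omega>)))" for \<omega>
      by (simp add: sum_distrib_left sum_distrib_right sum_subtractf right_diff_distrib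
          sum.swap[of _ H] mult.assoc)
    have "(\<integral>\<^sup>+\<omega>. ennreal (((\<Sum>v\<in>F. a v * X v \<omega>)
        - (\<Sum>u\<in>H. (\<Sum>v\<in>F. a v * c v u) * Z u \<omega>))\<^sup>2) \<partial>M)
        \<le> ennreal A * (\<Sum>v\<in>F. \<integral>\<^sup>+\<omega>. ennreal ((X v \<omega> - (\<Sum>u\<in>H. c v u * Z u \<omega>))\<^sup>2) \<partial>M)"
      unfolding A_def residual using \<open>finite F\<close> by (intro nn_integral_sq_sum_le residual_measurable)
    also have "\<dots> \<le> ennreal A * (\<Sum>v\<in>F. ennreal \<delta>)"
      using elim by (intro mult_left_mono sum_mono) (auto intro: less_imp_le)
    also have "\<dots> < ennreal \<epsilon>"
      using \<delta>_pos \<delta>_small \<open>0 \<le> A\<close> \<open>0 < \<epsilon>\<close>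
      by (simp add: ennreal_mult[symmetric] ennreal_of_nat_eq_real_of_nat ennreal_lessI)
    finally show ?case .
  qed
qed

lemma L2_series_reindex:
  assumes "bij \<Phi>" and Y: "L2_series M c (\<lambda>u. Z (\<Phi> u)) Y"
  shows "L2_series M (\<lambda>w. c (inv \<Phi> w)) Z Y"
proof -
  have inj: "inj \<Phi>" using \<open>bij \<Phi>\<close> by (simp add: bij_def)
  have sum_eq: "(\<Sum>w\<in>H. c (inv \<Phi> w) * Z w \<omega>) = (\<Sum>u\<in>\<Phi> -` H. c u * Z (\<Phi> u) \<omega>)" for H \<omega>
  proof -
    have img: "\<Phi> ` (\<Phi> -` H) = H"
      using \<open>bij \<Phi>\<close> by (simp add: bij_def surj_image_vimage_eq)
    have "(\<Sum>w\<in>H. c (inv \<Phi> w) * Z w \<omega>) = (\<Sum>w\<in>\<Phi> ` (\<Phi> -` H). c (inv \<Phi> w) * Z w \<omega>)"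
      by (simp only: img)
    also have "\<dots> = (\<Sum>u\<in>\<Phi> -` H. c u * Z (\<Phi> u) \<omega>)"
      by (simp only: sum.reindex[OF inj_on_subset[OF inj subset_UNIV]] comp_def inv_f_f[OF inj])
    finally show ?thesis .
  qed
  show ?thesis
    unfolding L2_series_def
  proof (intro conjI allI impI)
    show "Y \<in> borel_measurable M" using Y by (simp add: L2_series_def)
    fix \<epsilon> :: real assume "0 < \<epsilon>"
    then have "\<exists>F0. finite F0 \<and> (\<forall>F. finite F \<and> F0 \<subseteq> F \<longrightarrow>
        (\<integral>\<^sup>+\<omega>. ennreal ((Y \<omega> - (\<Sum>u\<in>F. c u * Z (\<Phi> u) \<omega>))\<^sup>2) \<partial>M) < ennreal \<epsilon>)"
      using Y by (simp add: L2_series_def)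
    then obtain F0 where "finite F0" and F0: "\<And>F. finite F \<Longrightarrow> F0 \<subseteq> F \<Longrightarrow>
        (\<integral>\<^sup>+\<omega>. ennreal ((Y \<omega> - (\<Sum>u\<in>F. c u * Z (\<Phi> u) \<omega>))\<^sup>2) \<partial>M) < ennreal \<epsilon>"
      by auto
    have "(\<integral>\<^sup>+\<omega>. ennreal ((Y \<omega> - (\<Sum>w\<in>H. c (inv \<Phi> w) * Z w \<omega>))\<^sup>2) \<partial>M) < ennreal \<epsilon>"
      if "finite H" "\<Phi> ` F0 \<subseteq> H" for H
    proof -
      have "finite (\<Phi> -` H)"
        using that(1) inj by (simp add: finite_vimageI)
      moreover have "F0 \<subseteq> \<Phi> -` H"
        using that(2) by auto
      ultimately show ?thesis
        using F0[of "\<Phi> -` H"] by (simp only: sum_eq)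
    qed
    then show "\<exists>F0. finite F0 \<and> (\<forall>F. finite F \<and> F0 \<subseteq> F \<longrightarrow>
        (\<integral>\<^sup>+\<omega>. ennreal ((Y \<omega> - (\<Sum>w\<in>F. c (inv \<Phi> w) * Z w \<omega>))\<^sup>2) \<partial>M) < ennreal \<epsilon>)"
      using \<open>finite F0\<close> by (intro exI[of _ "\<Phi> ` F0"]) auto
  qed
qed

lemma is_GFF_of_L2_series:
  assumes dr: "d_regular_graph E d" and tr: "transient E d" and I: "iid_std_normal M Z"
    and X: "\<And>v. L2_series M (green_root E d v) Z (X v)"
  shows "is_GFF E d M X"
  unfolding is_GFF_def
proof (intro conjI allI impI)
  show "X v \<in> borel_measurable M" for v
    using X by (simp add: L2_series_iff_eventually)
  fix F :: "'a set" and a :: "'a \<Rightarrow> real" assume "finite F"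
  let ?g = "\<lambda>w. \<Sum>v\<in>F. a v * green_root E d v w"
  have "L2_series M ?g Z (\<lambda>\<omega>. \<Sum>v\<in>F. a v * X v \<omega>)"
    by (intro L2_series_sum \<open>finite F\<close> X iid_std_normal_measurable[OF I])
  moreover have "((\<lambda>w. (?g w)\<^sup>2) has_sum (\<Sum>u\<in>F. \<Sum>v\<in>F. a u * a v * green E d u v)) UNIV"
  proof -
    have "(?g w)\<^sup>2 = (\<Sum>u\<in>F. \<Sum>v\<in>F. a u * a v * (green_root E d u w * green_root E d v w))" for w
      by (simp add: power2_eq_square sum_product mult_ac)
    then show ?thesis
      using \<open>finite F\<close>
      by (simp only:) (intro has_sum_sum has_sum_cmult_right green_root_has_sum[OF dr tr])
  qed
  ultimately show "distr M borel (\<lambda>\<omega>. \<Sum>v\<in>F. a v * X v \<omega>)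
      = centered_normal (\<Sum>u\<in>F. \<Sum>v\<in>F. a u * a v * green E d u v)"
    by (rule distr_L2_series_centered_normal[OF I])
qed

theorem mainTheorem15:
  fixes E :: "'v \<Rightarrow> 'v \<Rightarrow> bool" and d :: nat and r :: 'v
  assumes "d_regular_graph E d" and "connected_graph E"
    and "vertex_transitive E" and "transient E d"
  shows "\<exists>\<beta> :: 'v \<Rightarrow> real.
     (\<lambda>u. (\<beta> u)\<^sup>2) summable_on UNIV \<and>
     (\<forall>\<phi>. graph_aut E \<phi> \<and> \<phi> r = r \<longrightarrow> (\<forall>u. \<beta> (\<phi> u) = \<beta> u)) \<and>
     (\<forall>(M :: 'w measure) Z (\<Phi> :: 'v \<Rightarrow> 'v \<Rightarrow> 'v).
        iid_std_normal M Z \<and> (\<forall>v. graph_aut E (\<Phi> v) \<and> \<Phi> v r = v) \<longrightarrow>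
        (\<exists>X. \<forall>v. L2_series M (\<lambda>u. \<beta> u) (\<lambda>u. Z (\<Phi> v u)) (X v)) \<and>
        (\<forall>X. (\<forall>v. L2_series M (\<lambda>u. \<beta> u) (\<lambda>u. Z (\<Phi> v u)) (X v)) \<longrightarrow> is_GFF E d M X))"
proof (intro exI[of _ "green_root E d r"] conjI allI impI)
  note dr = assms(1) and tr = assms(4)
  let ?\<beta> = "green_root E d r"
  show summable: "(\<lambda>u. (?\<beta> u)\<^sup>2) summable_on UNIV"
    using green_root_has_sum[OF dr tr, of r r] by (auto simp: power2_eq_square summable_on_def)
  show "?\<beta> (\<phi> u) = ?\<beta> u" if "graph_aut E \<phi> \<and> \<phi> r = r" for \<phi> u
    using green_root_aut[of E \<phi> d r u] that by simp
  fix M :: "'w measure" and Z :: "'v \<Rightarrow> 'w \<Rightarrow> real" and \<Phi> :: "'v \<Rightarrow> 'v \<Rightarrow> 'v"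
  assume "iid_std_normal M Z \<and> (\<forall>v. graph_aut E (\<Phi> v) \<and> \<Phi> v r = v)"
  then have I: "iid_std_normal M Z" and aut: "\<And>v. graph_aut E (\<Phi> v)" "\<And>v. \<Phi> v r = v"
    by auto
  have bij: "bij (\<Phi> v)" for v using aut by (simp add: graph_aut_def)
  have "\<forall>v. \<exists>Y. L2_series M ?\<beta> (\<lambda>u. Z (\<Phi> v u)) Y"
    using I bij by (intro allI L2_series_exists orthonormal_iid_std_normal summable bij_is_inj)
      (simp add: iid_std_normal_def)
  then show "\<exists>X. \<forall>v. L2_series M ?\<beta> (\<lambda>u. Z (\<Phi> v u)) (X v)"
    by (rule choice)
  fix X assume X: "\<forall>v. L2_series M ?\<beta> (\<lambda>u. Z (\<Phi> v u)) (X v)"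
  have "?\<beta> (inv (\<Phi> v) w) = green_root E d v w" for v w
    using green_root_aut[OF aut(1)[of v], of d r "inv (\<Phi> v) w"] aut(2)[of v] bij[of v]
    by (simp add: bij_is_surj surj_f_inv_f)
  then have "L2_series M (green_root E d v) Z (X v)" for v
    using L2_series_reindex[OF bij X[rule_format]] by simp
  then show "is_GFF E d M X"
    by (rule is_GFF_of_L2_series[OF dr tr I])
qed

end
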